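(* Under the hypotheses of the preceding setting (independent $[0,1]$-valued $X_t$ with common mean $\mu$, filtration $(\mathcal{F}_t)$ with $\sigma(X_1,\dots,X_t)\subset\mathcal{F}_t$ and $X_s$ independent of $\mathcal{F}_t$ for $s>t$, $\{0,1\}$-valued $\epsilon_t$ that are $\mathcal{F}_{t-1}$-measurable, $S(n)=\sum_{s\le n}\epsilon_sX_s$, $N(n)=\sum_{s\le n}\epsilon_s$, $\hat\mu(n)=S(n)/N(n)$), for every $\delta>0$ and every integer $n\ge2$, \[\mathbb{P}\big(N(n)\ge1,\ N(n)\,d(\hat\mu(n),\mu)>\delta\big)\le 2e\lceil\delta\log(n)\rceil\exp(-\delta).\]
   Context: $d(p,q)=p\log\frac pq+(1-p)\log\frac{1-p}{1-q}$ for $p,q\in[0,1]$ (Bernoulli Kullback–Leibler divergence), with conventions $0\log0=0\log(0/0)=0$ and $x\log(x/0)=+\infty$ for $x>0$. *)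

theory Defs
  imports "HOL-Probability.Probability"
begin

definition xlogxy :: "real \<Rightarrow> real \<Rightarrow> ereal" where
  "xlogxy x y = (if x = 0 then 0 else if y = 0 then \<infinity> else ereal (x * ln (x / y)))"

definition kl_bern :: "real \<Rightarrow> real \<Rightarrow> ereal" where
  "kl_bern p q = xlogxy p q + xlogxy (1 - p) (1 - q)"

end

theory Submission
  imports Defs
begin

text \<open>
  Strategy (Chernoff bound + exponential supermartingale + peeling + reflection):
  (1) Analytic facts: with the Bernoulli log-MGF bern_lmgf mu l = ln(1 - mu + mu e^l), a single
      tilt l certifies every x >= mu with d(x, mu) > c through l x - bern_lmgf mu l >= c
      (chernoff_level); Hoeffding's chord bound gives E exp(l X) <= exp(bern_lmgf mu l).
  (2) Probabilistic facts: since the sampling indicators are predictable and X_s is independent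
      of the past, W_l(n) = exp(l S(n) - N(n) bern_lmgf mu l) is a nonnegative supermartingale
      with E W_l(n) <= 1, so P(W_l(n) >= a) <= 1/a (tilted_tail).
  (3) Peeling: slicing N(n) in [1, n] geometrically with ratio delta/(delta-1) yields at most
      ceil(delta log n) slices; on each slice one tilted process exceeds e^(delta-1), which
      bounds upper deviations by ceil(delta log n) e^(1-delta) (upper_deviation_bound).
  (4) Lower deviations are upper deviations of 1 - X; the union gives the factor 2.
      For delta <= 1 the bound exceeds 1 and is trivial.
\<close>

text \<open>Log moment generating function of a Bernoulli(mu) variable; it dominates the log-MGF of
  every [0,1]-valued variable with mean mu.\<close>
definition bern_lmgf :: "real \<Rightarrow> real \<Rightarrow> real" where
  "bern_lmgf \<mu> l = ln (1 - \<mu> + \<mu> * exp l)"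

definition kl_real :: "real \<Rightarrow> real \<Rightarrow> real" where
  "kl_real \<mu> x = x * ln (x / \<mu>) + (1 - x) * ln ((1 - x) / (1 - \<mu>))"

text \<open>The derivative of kl_real in x; it is also the optimal Chernoff tilt for level x.\<close>
definition kl_tilt :: "real \<Rightarrow> real \<Rightarrow> real" where
  "kl_tilt \<mu> x = ln (x / \<mu>) - ln ((1 - x) / (1 - \<mu>))"

lemma kl_bern_interior:
  "0 < \<mu> \<Longrightarrow> \<mu> < 1 \<Longrightarrow> 0 < x \<Longrightarrow> x < 1 \<Longrightarrow> kl_bern x \<mu> = ereal (kl_real \<mu> x)"
  by (simp add: kl_bern_def xlogxy_def kl_real_def)

lemma kl_bern_one: "0 < \<mu> \<Longrightarrow> \<mu> < 1 \<Longrightarrow> kl_bern 1 \<mu> = ereal (- ln \<mu>)"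
  by (simp add: kl_bern_def xlogxy_def ln_div)

lemma kl_bern_self: "0 \<le> \<mu> \<Longrightarrow> \<mu> \<le> 1 \<Longrightarrow> kl_bern \<mu> \<mu> = 0"
  by (cases "\<mu> = 0 \<or> \<mu> = 1") (auto simp: kl_bern_def xlogxy_def)

lemma kl_bern_flip: "kl_bern (1 - x) (1 - \<mu>) = kl_bern x \<mu>"
  unfolding kl_bern_def by (simp add: add.commute)

lemma kl_bern_measurable [measurable]: "(\<lambda>x. kl_bern x \<mu>) \<in> borel_measurable borel"
  unfolding kl_bern_def xlogxy_def by measurable

lemma kl_real_deriv:
  assumes "0 < \<mu>" "\<mu> < 1" "0 < x" "x < 1"
  shows "(kl_real \<mu> has_real_derivative kl_tilt \<mu> x) (at x)"
proof -
  let ?f = "\<lambda>x. x * (ln x - ln \<mu>) + (1 - x) * (ln (1 - x) - ln (1 - \<mu>))"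
  have "(?f has_real_derivative (ln x - ln \<mu>) + x * (1 / x)
          + (- (ln (1 - x) - ln (1 - \<mu>)) + (1 - x) * (- 1 / (1 - x)))) (at x)"
    using assms by (auto intro!: derivative_eq_intros)
  then have "(?f has_real_derivative kl_tilt \<mu> x) (at x)"
    using assms by (simp add: kl_tilt_def ln_div algebra_simps)
  then show ?thesis
    by (rule has_field_derivative_transform_within_open[where S="{0<..<1}"])
       (use assms in \<open>auto simp: kl_real_def ln_div\<close>)
qed

lemma kl_real_continuous:
  assumes "0 < \<mu>" "\<mu> < 1" "0 < a" "b < 1"
  shows "continuous_on {a..b} (kl_real \<mu>)"
proof -
  have "isCont (kl_real \<mu>) x" if "x \<in> {a..b}" for x
    using that assms kl_real_deriv[OF assms(1,2), of x] DERIV_isCont by force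
  then show ?thesis by (simp add: continuous_at_imp_continuous_on)
qed

lemma kl_tilt_nonneg: "0 < \<mu> \<Longrightarrow> \<mu> \<le> x \<Longrightarrow> x < 1 \<Longrightarrow> 0 \<le> kl_tilt \<mu> x"
  unfolding kl_tilt_def by (smt (verit) divide_le_eq_1 le_divide_eq_1 ln_ge_zero ln_le_zero_iff zero_less_divide_iff)

lemma kl_real_mono:
  assumes "0 < \<mu>" "\<mu> < 1" "\<mu> \<le> x" "x \<le> z" "z < 1"
  shows "kl_real \<mu> x \<le> kl_real \<mu> z"
proof (rule DERIV_nonneg_imp_increasing_open[OF assms(4)])
  fix y assume "x < y" "y < z"
  then show "\<exists>d. (kl_real \<mu> has_real_derivative d) (at y) \<and> 0 \<le> d"
    using assms kl_real_deriv[OF assms(1,2), of y] kl_tilt_nonneg[of \<mu> y] by auto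
next
  show "continuous_on {x..z} (kl_real \<mu>)" using assms by (intro kl_real_continuous) auto
qed

text \<open>Legendre duality at a point: the tilt attains the divergence in the variational
  formula kl(z, mu) = sup_l (l z - log E exp(l X)) for X Bernoulli(mu).\<close>
lemma kl_real_legendre:
  assumes "0 < \<mu>" "\<mu> < 1" "0 < z" "z < 1"
  shows "kl_tilt \<mu> z * z - bern_lmgf \<mu> (kl_tilt \<mu> z) = kl_real \<mu> z"
proof -
  have "exp (kl_tilt \<mu> z) = (z / \<mu>) / ((1 - z) / (1 - \<mu>))"
    using assms by (simp add: kl_tilt_def exp_diff)
  then have "1 - \<mu> + \<mu> * exp (kl_tilt \<mu> z) = (1 - \<mu>) / (1 - z)"
    using assms by (simp add: field_simps)
  then have "bern_lmgf \<mu> (kl_tilt \<mu> z) = ln (1 - \<mu>) - ln (1 - z)"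
    using assms by (simp add: bern_lmgf_def ln_div)
  then show ?thesis
    using assms by (simp add: kl_tilt_def kl_real_def ln_div algebra_simps)
qed

lemma chernoff_level_interior:
  assumes "0 < \<mu>" "\<mu> < 1" "\<mu> \<le> z" "z < 1"
    and "x \<in> {\<mu>..1}" "kl_bern x \<mu> > ereal (kl_real \<mu> z)"
  shows "kl_tilt \<mu> z * x - bern_lmgf \<mu> (kl_tilt \<mu> z) \<ge> kl_real \<mu> z"
proof -
  have "z < x"
  proof (rule ccontr)
    assume "\<not> z < x"
    then have "kl_real \<mu> x \<le> kl_real \<mu> z" using assms by (intro kl_real_mono) auto
    moreover have "kl_bern x \<mu> = ereal (kl_real \<mu> x)"
      using assms \<open>\<not> z < x\<close> by (intro kl_bern_interior) auto
    ultimately show False using assms(6) by simp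
  qed
  then have "kl_tilt \<mu> z * z \<le> kl_tilt \<mu> z * x"
    using assms kl_tilt_nonneg by (intro mult_left_mono) auto
  then show ?thesis using kl_real_legendre[of \<mu> z] assms by simp
qed

text \<open>The level c is reached at the endpoint x = 1 with the explicit tilt below.\<close>
lemma bern_lmgf_endpoint:
  assumes "\<mu> < exp (- c)" "\<mu> < 1"
  defines "l \<equiv> ln (1 - \<mu>) - ln (exp (- c) - \<mu>)"
  shows "l - bern_lmgf \<mu> l = c"
proof -
  let ?e = "exp (- c)"
  have exp_l: "exp l = (1 - \<mu>) / (?e - \<mu>)"
    using assms by (simp add: l_def exp_diff)
  have "1 - \<mu> + \<mu> * exp l = (1 - \<mu>) * ?e / (?e - \<mu>)"
    unfolding exp_l using assms(1,2) by (simp add: field_simps)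
  then have "bern_lmgf \<mu> l = ln (1 - \<mu>) + ln ?e - ln (?e - \<mu>)"
    using assms(1,2) by (simp add: bern_lmgf_def ln_div ln_mult)
  then show ?thesis by (simp add: l_def)
qed

lemma chernoff_level:
  assumes mu: "0 < \<mu>" "\<mu> < 1" and c: "c > 0"
  shows "\<exists>l. \<forall>x\<in>{\<mu>..1}. kl_bern x \<mu> > ereal c \<longrightarrow> l * x - bern_lmgf \<mu> l \<ge> c"
proof (cases "\<exists>b. \<mu> < b \<and> b < 1 \<and> kl_real \<mu> b \<ge> c")
  case True
  then obtain b where b: "\<mu> < b" "b < 1" "c \<le> kl_real \<mu> b" by blast
  have "kl_real \<mu> \<mu> = 0" by (simp add: kl_real_def)
  then obtain z where z: "\<mu> \<le> z" "z \<le> b" "kl_real \<mu> z = c"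
    using IVT'[of "kl_real \<mu>" \<mu> c b] b mu c kl_real_continuous[OF mu, of \<mu> b] by auto
  show ?thesis
    using chernoff_level_interior[OF mu z(1)] z b by (intro exI[of _ "kl_tilt \<mu> z"]) auto
next
  case False
  text \<open>Below 1 the divergence stays at most c, so only the endpoint x = 1 can exceed c.\<close>
  have below: "\<not> kl_bern x \<mu> > ereal c" if "x \<in> {\<mu>..<1}" for x
  proof -
    have "kl_real \<mu> x \<le> c"
      using False that c by (cases "x = \<mu>") (auto simp: kl_real_def)
    then show ?thesis using kl_bern_interior[OF mu, of x] that mu by auto
  qed
  show ?thesis
  proof (cases "exp (- c) \<le> \<mu>")
    case True
    then have "- ln \<mu> \<le> c" using mu by (metis ln_exp ln_le_cancel_iff exp_gt_zero minus_le_iff)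
    then have "\<not> kl_bern 1 \<mu> > ereal c" using kl_bern_one[OF mu] by simp
    then show ?thesis using below by (metis atLeastAtMost_iff atLeastLessThan_iff order_less_le)
  next
    case False
    then have "\<exists>l. l * 1 - bern_lmgf \<mu> l = c" using bern_lmgf_endpoint[of \<mu> c] mu by auto
    then show ?thesis using below
      by (metis atLeastAtMost_iff atLeastLessThan_iff order_less_le order_refl)
  qed
qed

text \<open>Hoeffding's chord bound: by convexity, exp(l x) <= 1 - x + x exp l on [0,1].\<close>
lemma exp_le_chord: "0 \<le> (x::real) \<Longrightarrow> x \<le> 1 \<Longrightarrow> exp (l * x) \<le> 1 - x + x * exp l"
  using convex_onD[OF exp_convex, of x 0 l] by (simp add: mult.commute)

lemma peeling_slice:
  fixes q N :: real and n :: nat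
  assumes q: "q > 1" and N: "1 \<le> N" "N \<le> real n" and n: "n \<ge> 2"
  shows "\<exists>k. 1 \<le> k \<and> k \<le> nat \<lceil>ln (real n) / ln q\<rceil> \<and> q ^ (k - 1) \<le> N \<and> N \<le> q ^ k"
proof -
  have lq: "ln q > 0" using q by simp
  define r where "r = ln N / ln q"
  define k where "k = max 1 (nat \<lceil>r\<rceil>)"
  have ln_N: "ln N = r * ln q" unfolding r_def using lq by simp
  have "r \<le> real k" unfolding k_def by linarith
  then have "ln N \<le> ln (q ^ k)" unfolding ln_N using lq q by (simp add: ln_realpow mult_right_mono)
  then have upper: "N \<le> q ^ k" using N q by simp
  have lower: "q ^ (k - 1) \<le> N"
  proof (cases "k = 1")
    case True then show ?thesis using N by simp
  next
    case False
    then have "real (k - 1) \<le> r" unfolding k_def by linarith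
    then have "ln (q ^ (k - 1)) \<le> ln N" unfolding ln_N using lq q by (simp add: ln_realpow mult_right_mono)
    then show ?thesis using N q by simp
  qed
  have "r \<le> ln (real n) / ln q" unfolding r_def using N lq by (simp add: divide_right_mono)
  moreover have "ln (real n) / ln q > 0" using n lq by simp
  ultimately have "\<lceil>r\<rceil> \<le> \<lceil>ln (real n) / ln q\<rceil>" "1 \<le> \<lceil>ln (real n) / ln q\<rceil>"
    by (auto intro: ceiling_mono)
  then have "k \<le> nat \<lceil>ln (real n) / ln q\<rceil>" unfolding k_def by linarith
  then show ?thesis using lower upper by (intro exI[of _ k]) (simp add: k_def)
qed

text \<open>With ratio q = delta/(delta-1) the number of slices is at most ceil(delta log n),
  since log q >= 1/delta.\<close>
lemma peeling_count:
  fixes \<delta> :: real and n :: nat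
  assumes d: "\<delta> > 1" and n: "n \<ge> 1"
  shows "nat \<lceil>ln (real n) / ln (\<delta> / (\<delta> - 1))\<rceil> \<le> nat \<lceil>\<delta> * ln (real n)\<rceil>"
proof -
  have "1 / \<delta> \<le> - ln (1 - 1 / \<delta>)" using ln_le_minus_one[of "1 - 1 / \<delta>"] d by simp
  also have "- ln (1 - 1 / \<delta>) = ln (\<delta> / (\<delta> - 1))"
    using d by (simp add: ln_div field_simps)
  finally have "1 / \<delta> \<le> ln (\<delta> / (\<delta> - 1))" .
  then have "1 / ln (\<delta> / (\<delta> - 1)) \<le> \<delta>"
    using d by (simp add: field_simps)
  then have "ln (real n) * (1 / ln (\<delta> / (\<delta> - 1))) \<le> ln (real n) * \<delta>"
    using n by (intro mult_left_mono) auto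
  then show ?thesis by (intro nat_mono ceiling_mono) (simp add: mult.commute)
qed

lemma ereal_mult_gt_imp_gt_div:
  fixes k :: ereal and N Q \<delta> :: real
  assumes "0 < N" "N \<le> Q" "0 \<le> \<delta>" "ereal N * k > ereal \<delta>"
  shows "k > ereal (\<delta> / Q)"
proof (cases k)
  case (real v)
  then have "\<delta> / N < v" using assms by (simp add: field_simps)
  moreover have "\<delta> / Q \<le> \<delta> / N" using assms by (intro divide_left_mono) auto
  ultimately show ?thesis using real by simp
qed (use assms in auto)

locale adaptive_sampling = prob_space M for M :: "'a measure" +
  fixes F :: "nat \<Rightarrow> 'a measure" and X :: "nat \<Rightarrow> 'a \<Rightarrow> real"
    and eps :: "nat \<Rightarrow> 'a \<Rightarrow> real" and \<mu> :: real
  assumes X_range: "\<And>t \<omega>. t \<ge> 1 \<Longrightarrow> \<omega> \<in> space M \<Longrightarrow> X t \<omega> \<in> {0..1}"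
    and X_mean: "\<And>t. t \<ge> 1 \<Longrightarrow> expectation (X t) = \<mu>"
    and F_sub: "\<And>t. subalgebra M (F t)"
    and F_mono: "\<And>s t. s \<le> t \<Longrightarrow> sets (F s) \<subseteq> sets (F t)"
    and X_adapted: "\<And>s t. 1 \<le> s \<Longrightarrow> s \<le> t \<Longrightarrow> X s \<in> borel_measurable (F t)"
    and X_future_indep: "\<And>s t. t < s \<Longrightarrow>
          indep_set (sets (F t)) {X s -` A \<inter> space M | A. A \<in> sets borel}"
    and eps_range: "\<And>t \<omega>. t \<ge> 1 \<Longrightarrow> \<omega> \<in> space M \<Longrightarrow> eps t \<omega> \<in> {0, 1}"
    and eps_pred: "\<And>t. t \<ge> 1 \<Longrightarrow> eps t \<in> borel_measurable (F (t - 1))"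
begin

definition samples :: "nat \<Rightarrow> 'a \<Rightarrow> real" where
  "samples n \<omega> = (\<Sum>s=1..n. eps s \<omega>)"

definition sampled_sum :: "nat \<Rightarrow> 'a \<Rightarrow> real" where
  "sampled_sum n \<omega> = (\<Sum>s=1..n. eps s \<omega> * X s \<omega>)"

lemma measurable_filtration_mono:
  "f \<in> borel_measurable (F s) \<Longrightarrow> s \<le> t \<Longrightarrow> f \<in> borel_measurable (F t)"
  using F_sub[of s] F_sub[of t] F_mono[of s t] unfolding measurable_def subalgebra_def by auto

lemma measurable_filtration_M: "f \<in> borel_measurable (F t) \<Longrightarrow> f \<in> borel_measurable M"
  by (rule measurable_from_subalg[OF F_sub])

lemma eps_measurable_F: "1 \<le> s \<Longrightarrow> s \<le> t + 1 \<Longrightarrow> eps s \<in> borel_measurable (F t)"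
  using measurable_filtration_mono[OF eps_pred] by simp

lemma X_measurable: "1 \<le> s \<Longrightarrow> X s \<in> borel_measurable M"
  using measurable_filtration_M[OF X_adapted[of s s]] by simp

lemma eps_measurable: "1 \<le> s \<Longrightarrow> eps s \<in> borel_measurable M"
  using measurable_filtration_M[OF eps_measurable_F[of s s]] by simp

lemma samples_measurable [measurable]: "samples n \<in> borel_measurable M"
  unfolding samples_def using eps_measurable by (intro borel_measurable_sum) auto

lemma sampled_sum_measurable [measurable]: "sampled_sum n \<in> borel_measurable M"
  unfolding sampled_sum_def using eps_measurable X_measurable
  by (intro borel_measurable_sum borel_measurable_times) auto

lemma integrable_bounded:
  "f \<in> borel_measurable M \<Longrightarrow> (\<And>\<omega>. \<omega> \<in> space M \<Longrightarrow> \<bar>f \<omega>\<bar> \<le> B) \<Longrightarrow> integrable M f"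
  for f :: "'a \<Rightarrow> real"
  by (rule integrable_const_bound[where B=B]) auto

lemma X_integrable: "1 \<le> s \<Longrightarrow> integrable M (X s)"
  by (rule integrable_bounded[where B=1, OF X_measurable]) (use X_range in auto)

lemma mean_unit: "0 \<le> \<mu>" "\<mu> \<le> 1"
proof -
  have "0 \<le> expectation (X 1)" by (rule integral_nonneg_AE) (use X_range in auto)
  moreover have "expectation (X 1) \<le> expectation (\<lambda>_. 1)"
    by (rule integral_mono_AE) (use X_range X_integrable in auto)
  ultimately show "0 \<le> \<mu>" "\<mu> \<le> 1" using X_mean[of 1] prob_space by auto
qed

lemma samples_bounds:
  assumes "\<omega> \<in> space M"
  shows "0 \<le> sampled_sum n \<omega>" "sampled_sum n \<omega> \<le> samples n \<omega>" "samples n \<omega> \<le> real n"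
proof -
  have t: "0 \<le> eps s \<omega> * X s \<omega> \<and> eps s \<omega> * X s \<omega> \<le> eps s \<omega> \<and> eps s \<omega> \<le> 1" if "s \<in> {1..n}" for s
    using that eps_range[of s \<omega>] X_range[of s \<omega>] assms by auto
  show "0 \<le> sampled_sum n \<omega>" unfolding sampled_sum_def using t by (intro sum_nonneg) auto
  show "sampled_sum n \<omega> \<le> samples n \<omega>"
    unfolding sampled_sum_def samples_def using t by (intro sum_mono) auto
  have "samples n \<omega> \<le> (\<Sum>s=1..n. 1)" unfolding samples_def using t by (intro sum_mono) auto
  then show "samples n \<omega> \<le> real n" by simp
qed

lemma future_product_expectation:
  fixes G :: "'a \<Rightarrow> real" and h :: "real \<Rightarrow> real"
  assumes ts: "t < s" and G: "G \<in> borel_measurable (F t)" and h: "h \<in> borel_measurable borel"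
    and "integrable M G" "integrable M (\<lambda>\<omega>. h (X s \<omega>))"
  shows "expectation (\<lambda>\<omega>. G \<omega> * h (X s \<omega>)) = expectation G * expectation (\<lambda>\<omega>. h (X s \<omega>))"
proof -
  have space_F: "space (F t) = space M" using F_sub[of t] unfolding subalgebra_def by auto
  have "indep_var borel G borel (X s)"
    unfolding indep_var_def indep_vars_def2
  proof
    show "\<forall>i\<in>UNIV. random_variable (case_bool borel borel i) (case_bool G (X s) i)"
      using measurable_filtration_M[OF G] X_measurable ts by (auto split: bool.split)
    show "indep_sets (\<lambda>i. {case_bool G (X s) i -` A \<inter> space M |A. A \<in> sets (case_bool borel borel i)}) UNIV"
      using X_future_indep[OF ts] unfolding indep_set_def
      by (rule indep_sets_mono_sets) (use measurable_sets[OF G] space_F in \<open>auto split: bool.split\<close>)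
  qed
  then have "indep_var borel G borel (\<lambda>\<omega>. h (X s \<omega>))"
    using indep_var_compose[of borel G borel "X s" id borel h borel] h by (simp add: comp_def)
  then show ?thesis using indep_var_lebesgue_integral assms(4,5) by blast
qed

lemma exp_tilt_le: "1 \<le> s \<Longrightarrow> \<omega> \<in> space M \<Longrightarrow> exp (l * X s \<omega>) \<le> exp \<bar>l\<bar>"
  using X_range[of s \<omega>] mult_left_le[of "X s \<omega>" "\<bar>l\<bar>"] abs_ge_self[of "l * X s \<omega>"]
  by (auto simp: abs_mult)

lemma exp_tilt_integrable: "1 \<le> s \<Longrightarrow> integrable M (\<lambda>\<omega>. exp (l * X s \<omega>))"
  by (rule integrable_bounded[where B="exp \<bar>l\<bar>"])
     (use X_measurable exp_tilt_le in auto)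

lemma mgf_bound: "1 \<le> s \<Longrightarrow> expectation (\<lambda>\<omega>. exp (l * X s \<omega>)) \<le> exp (bern_lmgf \<mu> l)"
proof -
  assume s: "1 \<le> s"
  have pos: "0 < 1 - \<mu> + \<mu> * exp l"
    using mean_unit by (cases "\<mu> = 1") (auto intro: add_pos_nonneg)
  have "expectation (\<lambda>\<omega>. exp (l * X s \<omega>)) \<le> expectation (\<lambda>\<omega>. 1 - X s \<omega> + X s \<omega> * exp l)"
    by (rule integral_mono[OF exp_tilt_integrable[OF s]])
       (use X_integrable[OF s] X_range[OF s] exp_le_chord in auto)
  also have "\<dots> = 1 - \<mu> + \<mu> * exp l"
    using X_integrable[OF s] X_mean[OF s] prob_space by simp
  finally show ?thesis using pos by (simp add: bern_lmgf_def)
qed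

lemma supermartingale_step:
  assumes G: "G \<in> borel_measurable (F m)" and e: "e \<in> borel_measurable (F m)"
    and bounds: "\<And>\<omega>. \<omega> \<in> space M \<Longrightarrow> 0 \<le> G \<omega> \<and> G \<omega> \<le> B \<and> e \<omega> \<in> {0, 1}"
  shows "expectation (\<lambda>\<omega>. G \<omega> * (1 - e \<omega> + e \<omega> * exp (l * X (Suc m) \<omega> - bern_lmgf \<mu> l)))
           \<le> expectation G"
proof -
  define H where "H \<omega> = G \<omega> * e \<omega> * exp (- bern_lmgf \<mu> l)" for \<omega>
  have [measurable]: "G \<in> borel_measurable M" "e \<in> borel_measurable M" "X (Suc m) \<in> borel_measurable M"
    using measurable_filtration_M[OF G] measurable_filtration_M[OF e] X_measurable by auto
  have H_F: "H \<in> borel_measurable (F m)" unfolding H_def using G e by measurable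
  have G_abs: "\<bar>G \<omega> * e \<omega>\<bar> \<le> B" "\<bar>G \<omega> * (1 - e \<omega>)\<bar> \<le> B" if "\<omega> \<in> space M" for \<omega>
    using bounds[OF that] by auto
  have int_Ge: "integrable M (\<lambda>\<omega>. G \<omega> * e \<omega>)"
    by (rule integrable_bounded[OF _ G_abs(1)]) auto
  have int_G1e: "integrable M (\<lambda>\<omega>. G \<omega> * (1 - e \<omega>))"
    by (rule integrable_bounded[OF _ G_abs(2)]) auto
  have int_H: "integrable M H" unfolding H_def using int_Ge by simp
  have int_HX: "integrable M (\<lambda>\<omega>. H \<omega> * exp (l * X (Suc m) \<omega>))"
  proof (rule integrable_bounded[where B="B * exp (- bern_lmgf \<mu> l) * exp \<bar>l\<bar>"])
    fix \<omega> assume \<omega>: "\<omega> \<in> space M"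
    have "\<bar>H \<omega> * exp (l * X (Suc m) \<omega>)\<bar> = \<bar>G \<omega> * e \<omega>\<bar> * exp (- bern_lmgf \<mu> l) * exp (l * X (Suc m) \<omega>)"
      by (simp add: H_def abs_mult)
    also have "\<dots> \<le> B * exp (- bern_lmgf \<mu> l) * exp \<bar>l\<bar>"
      using G_abs(1)[OF \<omega>] exp_tilt_le[OF _ \<omega>, of "Suc m" l] by (intro mult_mono) auto
    finally show "\<bar>H \<omega> * exp (l * X (Suc m) \<omega>)\<bar> \<le> B * exp (- bern_lmgf \<mu> l) * exp \<bar>l\<bar>" .
  qed (simp add: H_def)
  have H_nonneg: "0 \<le> expectation H"
    by (intro integral_nonneg_AE AE_I2) (use bounds in \<open>fastforce simp: H_def\<close>)
  have "expectation (\<lambda>\<omega>. G \<omega> * (1 - e \<omega> + e \<omega> * exp (l * X (Suc m) \<omega> - bern_lmgf \<mu> l)))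
      = expectation (\<lambda>\<omega>. G \<omega> * (1 - e \<omega>) + H \<omega> * exp (l * X (Suc m) \<omega>))"
    by (rule Bochner_Integration.integral_cong) (simp_all add: H_def exp_diff exp_minus field_simps)
  also have "\<dots> = expectation (\<lambda>\<omega>. G \<omega> * (1 - e \<omega>)) + expectation H * expectation (\<lambda>\<omega>. exp (l * X (Suc m) \<omega>))"
    using future_product_expectation[OF _ H_F _ int_H exp_tilt_integrable, of "Suc m" l]
    by (simp add: Bochner_Integration.integral_add[OF int_G1e int_HX])
  also have "\<dots> \<le> expectation (\<lambda>\<omega>. G \<omega> * (1 - e \<omega>)) + expectation H * exp (bern_lmgf \<mu> l)"
    using mgf_bound[of "Suc m" l] H_nonneg by (simp add: mult_left_mono)
  also have "expectation H * exp (bern_lmgf \<mu> l) = expectation (\<lambda>\<omega>. G \<omega> * e \<omega>)"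
    by (simp add: H_def[abs_def] exp_minus)
  also have "expectation (\<lambda>\<omega>. G \<omega> * (1 - e \<omega>)) + expectation (\<lambda>\<omega>. G \<omega> * e \<omega>)
      = expectation (\<lambda>\<omega>. G \<omega> * (1 - e \<omega>) + G \<omega> * e \<omega>)"
    by (rule Bochner_Integration.integral_add[OF int_G1e int_Ge, symmetric])
  also have "\<dots> = expectation G" by (simp add: algebra_simps)
  finally show ?thesis .
qed

definition tilted :: "real \<Rightarrow> nat \<Rightarrow> 'a \<Rightarrow> real" where
  "tilted l m \<omega> = exp (\<Sum>s=1..m. eps s \<omega> * (l * X s \<omega> - bern_lmgf \<mu> l))"

lemma tilted_measurable: "tilted l m \<in> borel_measurable (F m)"
proof -
  have "(\<lambda>\<omega>. eps s \<omega> * (l * X s \<omega> - bern_lmgf \<mu> l)) \<in> borel_measurable (F m)" if "s \<in> {1..m}" for s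
  proof -
    have [measurable]: "eps s \<in> borel_measurable (F m)" "X s \<in> borel_measurable (F m)"
      using that eps_measurable_F X_adapted by auto
    show ?thesis by measurable
  qed
  then have [measurable]: "(\<lambda>\<omega>. \<Sum>s=1..m. eps s \<omega> * (l * X s \<omega> - bern_lmgf \<mu> l)) \<in> borel_measurable (F m)"
    by (rule borel_measurable_sum)
  show ?thesis unfolding tilted_def by measurable
qed

lemma tilted_bounds:
  assumes "\<omega> \<in> space M"
  shows "0 < tilted l m \<omega>" "tilted l m \<omega> \<le> exp (real m * (\<bar>l\<bar> + \<bar>bern_lmgf \<mu> l\<bar>))"
proof -
  have "eps s \<omega> * (l * X s \<omega> - bern_lmgf \<mu> l) \<le> \<bar>l\<bar> + \<bar>bern_lmgf \<mu> l\<bar>" if "s \<in> {1..m}" for s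
    using that eps_range[of s \<omega>] X_range[of s \<omega>] assms mult_left_le[of "X s \<omega>" "\<bar>l\<bar>"]
      abs_ge_self[of "l * X s \<omega>"] by (auto simp: abs_mult)
  then have "(\<Sum>s=1..m. eps s \<omega> * (l * X s \<omega> - bern_lmgf \<mu> l)) \<le> (\<Sum>s=1..m. \<bar>l\<bar> + \<bar>bern_lmgf \<mu> l\<bar>)"
    by (rule sum_mono)
  then show "tilted l m \<omega> \<le> exp (real m * (\<bar>l\<bar> + \<bar>bern_lmgf \<mu> l\<bar>))" by (simp add: tilted_def)
qed (simp add: tilted_def)

lemma tilted_Suc:
  assumes "\<omega> \<in> space M"
  shows "tilted l (Suc m) \<omega> = tilted l m \<omega> *
           (1 - eps (Suc m) \<omega> + eps (Suc m) \<omega> * exp (l * X (Suc m) \<omega> - bern_lmgf \<mu> l))"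
  using eps_range[of "Suc m" \<omega>] assms by (auto simp: tilted_def exp_add)

text \<open>W_l is a nonnegative supermartingale started at 1, so its expectation is at most 1.\<close>
lemma tilted_expectation: "expectation (tilted l m) \<le> 1"
proof (induction m)
  case 0
  then show ?case by (simp add: tilted_def prob_space)
next
  case (Suc m)
  have "expectation (tilted l (Suc m)) = expectation (\<lambda>\<omega>. tilted l m \<omega> *
           (1 - eps (Suc m) \<omega> + eps (Suc m) \<omega> * exp (l * X (Suc m) \<omega> - bern_lmgf \<mu> l)))"
    by (rule Bochner_Integration.integral_cong) (simp_all add: tilted_Suc)
  also have "\<dots> \<le> expectation (tilted l m)"
    using tilted_bounds eps_range
    by (intro supermartingale_step tilted_measurable eps_measurable_F) (auto simp: less_imp_le)
  finally show ?case using Suc.IH by linarith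
qed

lemma tilted_tail: "a > 0 \<Longrightarrow> prob {\<omega>\<in>space M. tilted l n \<omega> \<ge> a} \<le> 1 / a"
proof -
  assume a: "a > 0"
  have int: "integrable M (tilted l n)"
    using tilted_bounds by (intro integrable_bounded measurable_filtration_M[OF tilted_measurable])
      (auto simp: less_imp_le)
  have "prob {\<omega>\<in>space M. tilted l n \<omega> \<ge> a} \<le> expectation (tilted l n) / a"
    by (rule integral_Markov_inequality_measure[OF int _ _ a, of "space M"])
       (use tilted_bounds in \<open>auto simp: less_imp_le\<close>)
  also have "\<dots> \<le> 1 / a" using tilted_expectation a by (simp add: divide_right_mono)
  finally show ?thesis .
qed

lemma tilted_eq: "tilted l n \<omega> = exp (l * sampled_sum n \<omega> - samples n \<omega> * bern_lmgf \<mu> l)"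
  by (simp add: tilted_def sampled_sum_def samples_def sum_distrib_left sum_distrib_right
      sum_subtractf algebra_simps)


definition upper_deviation :: "real \<Rightarrow> nat \<Rightarrow> 'a set" where
  "upper_deviation \<delta> n = {\<omega> \<in> space M. 1 \<le> samples n \<omega> \<and> \<mu> \<le> sampled_sum n \<omega> / samples n \<omega> \<and>
      ereal (samples n \<omega>) * kl_bern (sampled_sum n \<omega> / samples n \<omega>) \<mu> > ereal \<delta>}"

lemma upper_deviation_sets: "upper_deviation \<delta> n \<in> sets M"
proof -
  have [measurable]: "(\<lambda>\<omega>. ereal (samples n \<omega>) * kl_bern (sampled_sum n \<omega> / samples n \<omega>) \<mu>)
      \<in> borel_measurable M"
    by (intro borel_measurable_ereal_times) measurable
  show ?thesis unfolding upper_deviation_def by measurable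
qed

lemma upper_deviation_cover:
  assumes mu: "0 < \<mu>" and d: "\<delta> > 1" and n: "n \<ge> 2"
    and q: "q = \<delta> / (\<delta> - 1)"
    and lam: "\<And>k x. x \<in> {\<mu>..1} \<Longrightarrow> kl_bern x \<mu> > ereal (\<delta> / q ^ k) \<Longrightarrow>
                lam k * x - bern_lmgf \<mu> (lam k) \<ge> \<delta> / q ^ k"
    and \<omega>: "\<omega> \<in> upper_deviation \<delta> n"
  shows "\<exists>k\<in>{1..nat \<lceil>ln (real n) / ln q\<rceil>}. tilted (lam k) n \<omega> \<ge> exp (\<delta> - 1)"
proof -
  define N S where "N = samples n \<omega>" and "S = sampled_sum n \<omega>"
  have event: "1 \<le> N" "\<mu> \<le> S / N" "ereal N * kl_bern (S / N) \<mu> > ereal \<delta>" and "\<omega> \<in> space M"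
    using \<omega> unfolding upper_deviation_def N_def S_def by auto
  then have "S \<le> N" "N \<le> real n" using samples_bounds unfolding N_def S_def by auto
  then have x: "S / N \<in> {\<mu>..1}" using event by auto
  have q1: "q > 1" using q d by simp
  obtain k where k: "1 \<le> k" "k \<le> nat \<lceil>ln (real n) / ln q\<rceil>" "q ^ (k - 1) \<le> N" "N \<le> q ^ k"
    using peeling_slice[OF q1 event(1) \<open>N \<le> real n\<close> n] by blast
  have "kl_bern (S / N) \<mu> > ereal (\<delta> / q ^ k)"
    using ereal_mult_gt_imp_gt_div[OF _ k(4) _ event(3)] event(1) d by simp
  then have level: "lam k * (S / N) - bern_lmgf \<mu> (lam k) \<ge> \<delta> / q ^ k" using lam x by blast
  have "\<delta> - 1 = \<delta> / q" unfolding q using d by (simp add: field_simps)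
  also have "\<dots> = q ^ (k - 1) * (\<delta> / q ^ k)"
    using k(1) q1 by (cases k) (simp_all add: field_simps)
  also have "\<dots> \<le> N * (\<delta> / q ^ k)"
    using k(3) d q1 by (intro mult_right_mono) auto
  also have "\<dots> \<le> N * (lam k * (S / N) - bern_lmgf \<mu> (lam k))"
    using level event(1) by (intro mult_left_mono) auto
  also have "\<dots> = lam k * S - N * bern_lmgf \<mu> (lam k)"
    using event(1) by (simp add: algebra_simps)
  finally have "exp (\<delta> - 1) \<le> tilted (lam k) n \<omega>" by (simp add: tilted_eq N_def S_def)
  then show ?thesis using k by auto
qed

text \<open>Upper deviation bound for a nondegenerate mean: a union bound over the peeling slices,
  each controlled by the tail bound of one tilted process.\<close>
lemma upper_deviation_interior:
  assumes mu: "0 < \<mu>" "\<mu> < 1" and d: "\<delta> > 1" and n: "n \<ge> 2"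
  shows "prob (upper_deviation \<delta> n) \<le> real (nat \<lceil>\<delta> * ln (real n)\<rceil>) * exp (1 - \<delta>)"
proof -
  define q where "q = \<delta> / (\<delta> - 1)"
  define K where "K = nat \<lceil>ln (real n) / ln q\<rceil>"
  have "q > 1" using d by (simp add: q_def)
  then have "\<forall>k. \<exists>l. \<forall>x\<in>{\<mu>..1}. kl_bern x \<mu> > ereal (\<delta> / q ^ k) \<longrightarrow> l * x - bern_lmgf \<mu> l \<ge> \<delta> / q ^ k"
    using chernoff_level[OF mu] d by simp
  then obtain lam where lam: "\<And>k x. x \<in> {\<mu>..1} \<Longrightarrow> kl_bern x \<mu> > ereal (\<delta> / q ^ k) \<Longrightarrow>
      lam k * x - bern_lmgf \<mu> (lam k) \<ge> \<delta> / q ^ k"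
    by metis
  define A where "A k = {\<omega> \<in> space M. tilted (lam k) n \<omega> \<ge> exp (\<delta> - 1)}" for k
  have A_sets: "A k \<in> sets M" for k
    using measurable_filtration_M[OF tilted_measurable] unfolding A_def by measurable
  have "upper_deviation \<delta> n \<subseteq> (\<Union>k\<in>{1..K}. A k)"
    using upper_deviation_cover[OF mu(1) d n q_def lam] upper_deviation_sets
    unfolding A_def K_def by (fastforce dest: sets.sets_into_space)
  then have "prob (upper_deviation \<delta> n) \<le> prob (\<Union>k\<in>{1..K}. A k)"
    using A_sets by (intro finite_measure_mono) auto
  also have "\<dots> \<le> (\<Sum>k\<in>{1..K}. prob (A k))"
    using A_sets by (intro finite_measure_subadditive_finite) auto
  also have "\<dots> \<le> (\<Sum>k\<in>{1..K}. exp (1 - \<delta>))"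
    using tilted_tail[of "exp (\<delta> - 1)"] by (intro sum_mono) (simp add: A_def exp_diff)
  also have "\<dots> \<le> real (nat \<lceil>\<delta> * ln (real n)\<rceil>) * exp (1 - \<delta>)"
    using peeling_count[OF d, of n] n by (simp add: K_def q_def)
  finally show ?thesis .
qed

lemma mean_zero_observations_null:
  assumes "\<mu> = 0"
  shows "(\<Union>s\<in>{1..n}. {\<omega> \<in> space M. X s \<omega> \<noteq> 0}) \<in> sets M"
    and "prob (\<Union>s\<in>{1..n}. {\<omega> \<in> space M. X s \<omega> \<noteq> 0}) = 0"
proof -
  have Z_sets: "{\<omega> \<in> space M. X s \<omega> \<noteq> 0} \<in> sets M" if "s \<in> {1..n}" for s
  proof -
    have [measurable]: "X s \<in> borel_measurable M" using that X_measurable by auto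
    show ?thesis by measurable
  qed
  then show "(\<Union>s\<in>{1..n}. {\<omega> \<in> space M. X s \<omega> \<noteq> 0}) \<in> sets M" by auto
  have Z_null: "prob {\<omega> \<in> space M. X s \<omega> \<noteq> 0} = 0" if s: "s \<in> {1..n}" for s
  proof -
    have "AE \<omega> in M. X s \<omega> = 0"
      using integral_nonneg_eq_0_iff_AE[OF X_integrable] X_mean assms X_range s by auto
    then show ?thesis using AE_iff_measurable[OF Z_sets[OF s] refl] by (simp add: measure_def)
  qed
  have "prob (\<Union>s\<in>{1..n}. {\<omega> \<in> space M. X s \<omega> \<noteq> 0}) \<le> (\<Sum>s\<in>{1..n}. prob {\<omega> \<in> space M. X s \<omega> \<noteq> 0})"
    using Z_sets by (intro finite_measure_subadditive_finite) auto
  then show "prob (\<Union>s\<in>{1..n}. {\<omega> \<in> space M. X s \<omega> \<noteq> 0}) = 0"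
    using Z_null measure_nonneg[of M] by (simp add: antisym)
qed

text \<open>For a degenerate mean the upper deviation event is null: for mu = 1 the empirical mean
  would have to equal 1, and for mu = 0 all observations vanish almost surely.\<close>
lemma upper_deviation_degenerate:
  assumes "\<mu> = 0 \<or> \<mu> = 1" and "\<delta> \<ge> 0"
  shows "prob (upper_deviation \<delta> n) = 0"
proof -
  have off_mean: "sampled_sum n \<omega> / samples n \<omega> \<noteq> \<mu>"
    and in_unit: "\<mu> \<le> sampled_sum n \<omega> / samples n \<omega>" "sampled_sum n \<omega> / samples n \<omega> \<le> 1"
    and in_space: "\<omega> \<in> space M"
    if "\<omega> \<in> upper_deviation \<delta> n" for \<omega>
    using that samples_bounds[of \<omega> n] kl_bern_self[OF mean_unit] assms(2)
    by (auto simp: upper_deviation_def)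
  show ?thesis
  proof (cases "\<mu> = 1")
    case True
    then have "upper_deviation \<delta> n = {}" using off_mean in_unit by fastforce
    then show ?thesis by simp
  next
    case False
    then have "\<mu> = 0" using assms(1) by simp
    let ?Z = "\<Union>s\<in>{1..n}. {\<omega> \<in> space M. X s \<omega> \<noteq> 0}"
    text \<open>Off the null set Z all observations vanish, so the empirical mean equals mu = 0.\<close>
    have "upper_deviation \<delta> n \<subseteq> ?Z"
    proof
      fix \<omega> assume \<omega>: "\<omega> \<in> upper_deviation \<delta> n"
      show "\<omega> \<in> ?Z"
      proof (rule ccontr)
        assume "\<omega> \<notin> ?Z"
        then have "sampled_sum n \<omega> = 0" using in_space[OF \<omega>] by (simp add: sampled_sum_def)
        then show False using off_mean[OF \<omega>] \<open>\<mu> = 0\<close> by simp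
      qed
    qed
    then have "prob (upper_deviation \<delta> n) \<le> prob ?Z"
      using mean_zero_observations_null[OF \<open>\<mu> = 0\<close>] by (intro finite_measure_mono) auto
    then show ?thesis using mean_zero_observations_null[OF \<open>\<mu> = 0\<close>] measure_nonneg[of M]
      by (simp add: antisym)
  qed
qed

lemma upper_deviation_bound:
  assumes "\<delta> > 1" "n \<ge> 2"
  shows "prob (upper_deviation \<delta> n) \<le> real (nat \<lceil>\<delta> * ln (real n)\<rceil>) * exp (1 - \<delta>)"
proof (cases "0 < \<mu> \<and> \<mu> < 1")
  case True
  then show ?thesis using upper_deviation_interior assms by blast
next
  case False
  then have "prob (upper_deviation \<delta> n) = 0"
    using mean_unit assms by (intro upper_deviation_degenerate) auto
  moreover have "0 \<le> real (nat \<lceil>\<delta> * ln (real n)\<rceil>) * exp (1 - \<delta>)"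
    by (rule mult_nonneg_nonneg) auto
  ultimately show ?thesis by linarith
qed

text \<open>Reflection X -> 1 - X preserves the setting, with mean 1 - mu; it turns lower deviations
  into upper ones.\<close>
lemma reflected_setting: "adaptive_sampling M F (\<lambda>t \<omega>. 1 - X t \<omega>) eps (1 - \<mu>)"
proof unfold_locales
  fix s t :: nat
  show "1 \<le> s \<Longrightarrow> s \<le> t \<Longrightarrow> (\<lambda>\<omega>. 1 - X s \<omega>) \<in> borel_measurable (F t)"
    using X_adapted[of s t] by measurable
  assume "t < s"
  show "indep_set (sets (F t)) {(\<lambda>\<omega>. 1 - X s \<omega>) -` A \<inter> space M |A. A \<in> sets borel}"
    using X_future_indep[OF \<open>t < s\<close>] unfolding indep_set_def
  proof (rule indep_sets_mono_sets)
    have "{(\<lambda>\<omega>. 1 - X s \<omega>) -` A \<inter> space M |A. A \<in> sets borel}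
        \<subseteq> {X s -` A \<inter> space M |A. A \<in> sets borel}"
    proof safe
      fix A :: "real set" assume "A \<in> sets borel"
      then have "(\<lambda>y::real. 1 - y) -` A \<in> sets borel"
        using measurable_sets[of "\<lambda>y::real. 1 - y" borel borel A] by simp
      moreover have "(\<lambda>\<omega>. 1 - X s \<omega>) -` A \<inter> space M = X s -` ((\<lambda>y. 1 - y) -` A) \<inter> space M"
        by auto
      ultimately show "\<exists>B. (\<lambda>\<omega>. 1 - X s \<omega>) -` A \<inter> space M = X s -` B \<inter> space M \<and> B \<in> sets borel"
        by blast
    qed
    then show "case_bool (sets (F t)) {(\<lambda>\<omega>. 1 - X s \<omega>) -` A \<inter> space M |A. A \<in> sets borel} i
        \<subseteq> case_bool (sets (F t)) {X s -` A \<inter> space M |A. A \<in> sets borel} i" for i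
      by (cases i) auto
  qed
next
  fix t :: nat assume "1 \<le> t"
  then show "expectation (\<lambda>\<omega>. 1 - X t \<omega>) = 1 - \<mu>"
    using X_integrable X_mean prob_space by simp
qed (use X_range F_sub F_mono eps_range eps_pred in auto)

text \<open>Two-sided bound: a deviation of the empirical mean is either an upper deviation of X or
  an upper deviation of the reflected observations 1 - X, since kl is reflection invariant.\<close>
lemma deviation_bound:
  assumes "\<delta> > 1" "n \<ge> 2"
  shows "prob {\<omega> \<in> space M. 1 \<le> samples n \<omega> \<and>
            ereal (samples n \<omega>) * kl_bern (sampled_sum n \<omega> / samples n \<omega>) \<mu> > ereal \<delta>}
         \<le> 2 * (real (nat \<lceil>\<delta> * ln (real n)\<rceil>) * exp (1 - \<delta>))"
proof -
  interpret reflected: adaptive_sampling M F "\<lambda>t \<omega>. 1 - X t \<omega>" eps "1 - \<mu>"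
    by (rule reflected_setting)
  have sum: "reflected.sampled_sum n \<omega> = samples n \<omega> - sampled_sum n \<omega>" for \<omega>
    by (simp add: samples_def reflected.sampled_sum_def sampled_sum_def algebra_simps sum_subtractf)
  let ?event = "{\<omega> \<in> space M. 1 \<le> samples n \<omega> \<and>
      ereal (samples n \<omega>) * kl_bern (sampled_sum n \<omega> / samples n \<omega>) \<mu> > ereal \<delta>}"
  have "?event \<subseteq> upper_deviation \<delta> n \<union> reflected.upper_deviation \<delta> n"
  proof
    fix \<omega> assume "\<omega> \<in> ?event"
    then have \<omega>: "\<omega> \<in> space M" "1 \<le> samples n \<omega>"
      "ereal (samples n \<omega>) * kl_bern (sampled_sum n \<omega> / samples n \<omega>) \<mu> > ereal \<delta>" by auto
    show "\<omega> \<in> upper_deviation \<delta> n \<union> reflected.upper_deviation \<delta> n"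
    proof (cases "\<mu> \<le> sampled_sum n \<omega> / samples n \<omega>")
      case True
      then show ?thesis using \<omega> by (simp add: upper_deviation_def)
    next
      case False
      have ratio: "reflected.sampled_sum n \<omega> / samples n \<omega> = 1 - sampled_sum n \<omega> / samples n \<omega>"
        using \<omega>(2) by (simp add: sum diff_divide_distrib)
      show ?thesis
        using False \<omega> by (simp add: reflected.upper_deviation_def ratio kl_bern_flip)
    qed
  qed
  then have "prob ?event \<le> prob (upper_deviation \<delta> n \<union> reflected.upper_deviation \<delta> n)"
    using upper_deviation_sets reflected.upper_deviation_sets by (intro finite_measure_mono) auto
  also have "\<dots> \<le> prob (upper_deviation \<delta> n) + prob (reflected.upper_deviation \<delta> n)"
    using upper_deviation_sets reflected.upper_deviation_sets by (rule measure_Un_le)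
  finally show ?thesis
    using upper_deviation_bound[OF assms] reflected.upper_deviation_bound[OF assms] by linarith
qed

end

text \<open>The main theorem: the hypotheses of the statement give an instance of the locale, and the two-sided bound is rewritten
  into the form 2 e ceil(delta log n) exp(-delta).\<close>
theorem mainTheorem9:
  fixes M :: "'a measure" and F :: "nat \<Rightarrow> 'a measure"
    and X :: "nat \<Rightarrow> 'a \<Rightarrow> real" and eps :: "nat \<Rightarrow> 'a \<Rightarrow> real"
    and \<mu> \<delta> :: real and n :: nat
  assumes "prob_space M"
    and X_indep: "prob_space.indep_vars M (\<lambda>_. borel) X {1..}"
    and X_range: "\<And>t \<omega>. t \<ge> 1 \<Longrightarrow> \<omega> \<in> space M \<Longrightarrow> X t \<omega> \<in> {0..1}"
    and X_mean: "\<And>t. t \<ge> 1 \<Longrightarrow> prob_space.expectation M (X t) = \<mu>"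
    and F_sub: "\<And>t. subalgebra M (F t)"
    and F_mono: "\<And>s t. s \<le> t \<Longrightarrow> sets (F s) \<subseteq> sets (F t)"
    and X_adapted: "\<And>s t. 1 \<le> s \<Longrightarrow> s \<le> t \<Longrightarrow> X s \<in> borel_measurable (F t)"
    and X_future_indep: "\<And>s t. t < s \<Longrightarrow>
          prob_space.indep_set M (sets (F t)) {X s -` A \<inter> space M | A. A \<in> sets borel}"
    and eps_range: "\<And>t \<omega>. t \<ge> 1 \<Longrightarrow> \<omega> \<in> space M \<Longrightarrow> eps t \<omega> \<in> {0, 1}"
    and eps_pred: "\<And>t. t \<ge> 1 \<Longrightarrow> eps t \<in> borel_measurable (F (t - 1))"
    and "\<delta> > 0" and "n \<ge> 2"
  shows "measure M {\<omega> \<in> space M.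
            (\<Sum>s=1..n. eps s \<omega>) \<ge> 1 \<and>
            ereal (\<Sum>s=1..n. eps s \<omega>) *
              kl_bern ((\<Sum>s=1..n. eps s \<omega> * X s \<omega>) / (\<Sum>s=1..n. eps s \<omega>)) \<mu>
            > ereal \<delta>}
         \<le> 2 * exp 1 * real_of_int \<lceil>\<delta> * ln (real n)\<rceil> * exp (- \<delta>)"
proof -
  interpret adaptive_sampling M F X eps \<mu>
    by (intro adaptive_sampling.intro adaptive_sampling_axioms.intro) (fact assms)+
  let ?K = "real_of_int \<lceil>\<delta> * ln (real n)\<rceil>"
  have K: "1 \<le> ?K" using \<open>\<delta> > 0\<close> \<open>n \<ge> 2\<close> by simp
  have rhs: "2 * exp 1 * ?K * exp (- \<delta>) = 2 * (?K * exp (1 - \<delta>))"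
    by (simp add: exp_diff exp_minus field_simps)
  show ?thesis
  proof (cases "\<delta> \<le> 1")
    case True
    then have "1 \<le> ?K * exp (1 - \<delta>)" using K by (intro order_trans[OF _ mult_mono[OF K]]) auto
    then show ?thesis using rhs by (intro order_trans[OF prob_le_1]) linarith
  next
    case False
    moreover have "real (nat \<lceil>\<delta> * ln (real n)\<rceil>) = ?K" using K by linarith
    ultimately show ?thesis
      using deviation_bound[of \<delta> n] \<open>n \<ge> 2\<close> unfolding rhs samples_def sampled_sum_def by simp
  qed
qed

end
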